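(* Let $X$ be a topological vector space and let $\varphi: X\to\overline{\mathbb{R}}$ be continuous. Then $\varphi$ is linear if and only if $\varphi$ is additive and $\varphi(0)=0$.
   Context: $\overline{\mathbb{R}}=\mathbb{R}\cup\{-\infty,+\infty\}$ with the order topology (a neighborhood base of $+\infty$ is $\{\{y:y>a\}:a\in\mathbb{R}\}$, of $-\infty$ is $\{\{y:y<a\}:a\in\mathbb{R}\}$); continuity of $\varphi$ is ordinary continuity into this space. $\operatorname{epi}\varphi=\{(x,t)\in X\times\mathbb{R}:\varphi(x)\le t\}$, $\operatorname{hypo}\varphi=\{(x,t)\in X\times\mathbb{R}:\varphi(x)\ge t\}$. $\varphi$ is linear if $\operatorname{epi}\varphi$ and $\operatorname{hypo}\varphi$ are convex sets and $\varphi(0)=0$. $\varphi$ is additive if $\operatorname{epi}\varphi+\operatorname{epi}\varphi\subseteq\operatorname{epi}\varphi$ and $\operatorname{hypo}\varphi+\operatorname{hypo}\varphi\subseteq\operatorname{hypo}\varphi$. *)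

theory Defs
  imports "HOL-Analysis.Analysis" "HOL-Library.Extended_Real"
begin

text \<open>A (real) topological vector space is modelled as a type of sort
  topological_ab_group_add (continuous addition and negation) and real_vector, together with
  the explicit hypothesis (in the theorem) that scalar multiplication is jointly continuous.\<close>

definition epi_ereal :: "('a \<Rightarrow> ereal) \<Rightarrow> ('a \<times> real) set" where
  "epi_ereal \<phi> = {(x, t). \<phi> x \<le> ereal t}"

definition hypo_ereal :: "('a \<Rightarrow> ereal) \<Rightarrow> ('a \<times> real) set" where
  "hypo_ereal \<phi> = {(x, t). \<phi> x \<ge> ereal t}"

definition ereal_linear :: "('a::real_vector \<Rightarrow> ereal) \<Rightarrow> bool" where
  "ereal_linear \<phi> \<longleftrightarrow> convex (epi_ereal \<phi>) \<and> convex (hypo_ereal \<phi>) \<and> \<phi> 0 = 0"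

definition ereal_additive :: "('a::real_vector \<Rightarrow> ereal) \<Rightarrow> bool" where
  "ereal_additive \<phi> \<longleftrightarrow>
     {p + q | p q. p \<in> epi_ereal \<phi> \<and> q \<in> epi_ereal \<phi>} \<subseteq> epi_ereal \<phi> \<and>
     {p + q | p q. p \<in> hypo_ereal \<phi> \<and> q \<in> hypo_ereal \<phi>} \<subseteq> hypo_ereal \<phi>"

end

theory Submission
  imports Defs
begin

text \<open>Since \<open>hypo \<phi>\<close> is the reflection of \<open>epi (-\<phi>)\<close> in the real coordinate, both sides of
  the equivalence are conditions on \<open>epi \<phi>\<close> and \<open>epi (-\<phi>)\<close> alone. Linearity gives additivity by
  comparing the midpoint of two points of \<open>epi \<phi>\<close> with the midpoint of a point of \<open>hypo \<phi>\<close> and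
  the origin. Conversely, additivity makes the set of factors \<open>\<lambda> \<ge> 0\<close> with
  \<open>\<lambda> \<cdot> epi \<phi> \<subseteq> epi \<phi>\<close> closed under sums and halving, hence it contains the nonnegative dyadic
  rationals; continuity of \<open>\<phi>\<close> and of scalar multiplication makes it closed, so it is all of
  \<open>[0, \<infinity>)\<close>, and an additive cone is convex.\<close>

lemma ereal_le_iff_uminus_le: "ereal t \<le> a \<longleftrightarrow> - a \<le> ereal (- t)"
  by (metis ereal_minus_le_minus uminus_ereal.simps(1))

lemma ereal_not_le_obtain_between:
  assumes "\<not> a \<le> ereal s"
  obtains r where "s < r" "ereal r < a"
  using ereal_dense2[of "ereal s" a] assms by (auto simp: not_le)

lemma mem_epi_ereal [simp]: "(x, t) \<in> epi_ereal \<phi> \<longleftrightarrow> \<phi> x \<le> ereal t"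
  by (simp add: epi_ereal_def)

lemma mem_hypo_ereal [simp]: "(x, t) \<in> hypo_ereal \<phi> \<longleftrightarrow> ereal t \<le> \<phi> x"
  by (simp add: hypo_ereal_def)

definition reflect_real :: "'a \<times> real \<Rightarrow> 'a \<times> real" where
  "reflect_real = (\<lambda>(x, t). (x, - t))"

lemma linear_reflect_real: "linear (reflect_real :: 'a::real_vector \<times> real \<Rightarrow> _)"
  by (auto simp: linear_iff reflect_real_def)

lemma hypo_ereal_eq_vimage: "hypo_ereal \<phi> = reflect_real -` epi_ereal (\<lambda>x. - \<phi> x)"
  by (auto simp: reflect_real_def ereal_le_iff_uminus_le)

lemma epi_ereal_uminus_eq_vimage: "epi_ereal (\<lambda>x. - \<phi> x) = reflect_real -` hypo_ereal \<phi>"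
  by (auto simp: reflect_real_def ereal_le_iff_uminus_le)

lemma convex_hypo_ereal_iff: "convex (hypo_ereal \<phi>) \<longleftrightarrow> convex (epi_ereal (\<lambda>x. - \<phi> x))"
  by (metis hypo_ereal_eq_vimage epi_ereal_uminus_eq_vimage convex_linear_vimage linear_reflect_real)

definition epi_sum_closed :: "('a::plus \<Rightarrow> ereal) \<Rightarrow> bool" where
  "epi_sum_closed \<phi> \<longleftrightarrow>
     (\<forall>x y s t. \<phi> x \<le> ereal s \<longrightarrow> \<phi> y \<le> ereal t \<longrightarrow> \<phi> (x + y) \<le> ereal (s + t))"

lemma epi_sum_closedD:
  "epi_sum_closed \<phi> \<Longrightarrow> \<phi> x \<le> ereal s \<Longrightarrow> \<phi> y \<le> ereal t \<Longrightarrow> \<phi> (x + y) \<le> ereal (s + t)"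
  by (simp add: epi_sum_closed_def)

lemma epi_sum_subset_iff:
  "{p + q | p q. p \<in> epi_ereal \<phi> \<and> q \<in> epi_ereal \<phi>} \<subseteq> epi_ereal \<phi> \<longleftrightarrow> epi_sum_closed \<phi>"
  unfolding epi_sum_closed_def by fastforce

lemma hypo_sum_subset_iff:
  "{p + q | p q. p \<in> hypo_ereal \<phi> \<and> q \<in> hypo_ereal \<phi>} \<subseteq> hypo_ereal \<phi> \<longleftrightarrow>
     epi_sum_closed (\<lambda>x. - \<phi> x)"
proof -
  have "{p + q | p q. p \<in> hypo_ereal \<phi> \<and> q \<in> hypo_ereal \<phi>} \<subseteq> hypo_ereal \<phi> \<longleftrightarrow>
      (\<forall>x y s t. ereal s \<le> \<phi> x \<longrightarrow> ereal t \<le> \<phi> y \<longrightarrow> ereal (s + t) \<le> \<phi> (x + y))"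
    by fastforce
  also have "\<dots> \<longleftrightarrow> epi_sum_closed (\<lambda>x. - \<phi> x)" (is "?L \<longleftrightarrow> _")
    unfolding epi_sum_closed_def
  proof (intro iffI allI impI)
    fix x y s t
    assume "?L" "- \<phi> x \<le> ereal s" "- \<phi> y \<le> ereal t"
    with \<open>?L\<close>[rule_format, of "- s" x "- t" y] show "- \<phi> (x + y) \<le> ereal (s + t)"
      by (simp add: ereal_le_iff_uminus_le add.commute)
  next
    fix x y s t
    assume R: "\<forall>x y s t. - \<phi> x \<le> ereal s \<longrightarrow> - \<phi> y \<le> ereal t \<longrightarrow> - \<phi> (x + y) \<le> ereal (s + t)"
      and "ereal s \<le> \<phi> x" "ereal t \<le> \<phi> y"
    with R[rule_format, of x "- s" y "- t"] show "ereal (s + t) \<le> \<phi> (x + y)"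
      by (simp add: ereal_le_iff_uminus_le)
  qed
  finally show ?thesis .
qed

lemma ereal_additive_iff:
  "ereal_additive \<phi> \<longleftrightarrow> epi_sum_closed \<phi> \<and> epi_sum_closed (\<lambda>x. - \<phi> x)"
  unfolding ereal_additive_def epi_sum_subset_iff hypo_sum_subset_iff ..

lemma ereal_linear_iff:
  "ereal_linear \<phi> \<longleftrightarrow> convex (epi_ereal \<phi>) \<and> convex (epi_ereal (\<lambda>x. - \<phi> x)) \<and> \<phi> 0 = 0"
  by (simp add: ereal_linear_def convex_hypo_ereal_iff)

lemma epi_sum_closed_if_convex:
  fixes \<phi> :: "'a::real_vector \<Rightarrow> ereal"
  assumes epi: "convex (epi_ereal \<phi>)" and epi_neg: "convex (epi_ereal (\<lambda>x. - \<phi> x))"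
    and zero: "\<phi> 0 = 0"
  shows "epi_sum_closed \<phi>"
  unfolding epi_sum_closed_def
proof (intro allI impI)
  fix x y s t assume "\<phi> x \<le> ereal s" "\<phi> y \<le> ereal t"
  let ?m = "(1/2::real) *\<^sub>R x + (1/2::real) *\<^sub>R y"
  have "(1/2::real) *\<^sub>R (x, s) + (1/2::real) *\<^sub>R (y, t) \<in> epi_ereal \<phi>"
    using epi \<open>\<phi> x \<le> ereal s\<close> \<open>\<phi> y \<le> ereal t\<close> by (intro convexD) auto
  then have mid_le: "\<phi> ?m \<le> ereal ((s + t) / 2)"
    by (simp add: add_divide_distrib)
  show "\<phi> (x + y) \<le> ereal (s + t)"
  proof (rule ccontr)
    assume "\<not> \<phi> (x + y) \<le> ereal (s + t)"
    then obtain r where "s + t < r" "ereal r < \<phi> (x + y)"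
      by (rule ereal_not_le_obtain_between)
    then have "(1/2::real) *\<^sub>R (x + y, - r) + (1/2::real) *\<^sub>R (0, 0) \<in> epi_ereal (\<lambda>x. - \<phi> x)"
      using epi_neg zero by (intro convexD) (auto simp: ereal_le_iff_uminus_le[symmetric])
    then have "ereal (r / 2) \<le> \<phi> ?m"
      by (simp add: scaleR_right_distrib ereal_le_iff_uminus_le)
    with mid_le have "r / 2 \<le> (s + t) / 2"
      by (metis ereal_less_eq(3) order.trans)
    with \<open>s + t < r\<close> show False
      by simp
  qed
qed

lemma nonneg_subset_if_closed_dyadics:
  fixes D :: "real set"
  assumes "closed D" and "\<And>m k. real m / 2 ^ k \<in> D"
  shows "{0..} \<subseteq> D"
proof -
  have "closure ({0..} \<inter> (\<Union>k m. {real m / 2 ^ k})) = closure {0::real..}"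
    by (rule closure_dyadic_rationals_in_convex_set_pos_1) auto
  moreover have "closure ({0..} \<inter> (\<Union>k m. {real m / 2 ^ k})) \<subseteq> D"
    using assms by (intro closure_minimal) auto
  ultimately show ?thesis
    by simp
qed

lemma epi_half_closed:
  fixes \<phi> :: "'a::real_vector \<Rightarrow> ereal"
  assumes "epi_sum_closed (\<lambda>x. - \<phi> x)" and "\<phi> x \<le> ereal s"
  shows "\<phi> ((1/2) *\<^sub>R x) \<le> ereal (s / 2)"
proof (rule ccontr)
  assume "\<not> ?thesis"
  then obtain r where "s / 2 < r" "ereal r < \<phi> ((1/2) *\<^sub>R x)"
    by (rule ereal_not_le_obtain_between)
  then have "- \<phi> ((1/2) *\<^sub>R x) \<le> ereal (- r)"
    by (simp add: ereal_le_iff_uminus_le[symmetric])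
  from epi_sum_closedD[OF assms(1) this this]
  have "- \<phi> x \<le> ereal (- (r + r))"
    by (simp add: scaleR_left_distrib[symmetric])
  then have "ereal (r + r) \<le> \<phi> x"
    by (simp add: ereal_le_iff_uminus_le)
  with assms(2) have "r + r \<le> s"
    by (metis ereal_less_eq(3) order.trans)
  with \<open>s / 2 < r\<close> show False
    by linarith
qed

lemma epi_scaleR_closed:
  fixes \<phi> :: "'a::{topological_ab_group_add, real_vector} \<Rightarrow> ereal"
  assumes scaleR_cont: "continuous_on UNIV (\<lambda>(a::real, x::'a). a *\<^sub>R x)"
    and cont: "continuous_on UNIV \<phi>" and zero: "\<phi> 0 = 0"
    and sum: "epi_sum_closed \<phi>" and sum_neg: "epi_sum_closed (\<lambda>x. - \<phi> x)"
    and "\<phi> x \<le> ereal s" and "0 \<le> l"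
  shows "\<phi> (l *\<^sub>R x) \<le> ereal (l * s)"
proof -
  define D where "D = {l. \<forall>x s. \<phi> x \<le> ereal s \<longrightarrow> \<phi> (l *\<^sub>R x) \<le> ereal (l * s)}"
  have scaleR_line_cont: "continuous_on UNIV (\<lambda>l::real. l *\<^sub>R x)" for x :: 'a
  proof -
    have "continuous_on UNIV (\<lambda>l::real. (l, x))"
      by (intro continuous_intros)
    from continuous_on_compose2[OF scaleR_cont this] show ?thesis
      by simp
  qed
  have "closed {l. \<phi> (l *\<^sub>R x) \<le> ereal (l * s)}" for x s
    by (intro closed_Collect_le continuous_on_compose2[OF cont scaleR_line_cont] continuous_intros)
      auto
  moreover have "D = (\<Inter>(x, s) \<in> epi_ereal \<phi>. {l. \<phi> (l *\<^sub>R x) \<le> ereal (l * s)})"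
    by (auto simp: D_def)
  ultimately have "closed D"
    by auto
  have D_add: "a + b \<in> D" if "a \<in> D" "b \<in> D" for a b
    using that epi_sum_closedD[OF sum]
    by (simp add: D_def scaleR_left_distrib distrib_right)
  have D_half: "a / 2 \<in> D" if "a \<in> D" for a
    unfolding D_def
  proof (intro CollectI allI impI)
    fix x s
    assume "\<phi> x \<le> ereal s"
    with that have "\<phi> ((1/2) *\<^sub>R a *\<^sub>R x) \<le> ereal (a * s / 2)"
      by (intro epi_half_closed[OF sum_neg]) (simp add: D_def)
    then show "\<phi> ((a / 2) *\<^sub>R x) \<le> ereal (a / 2 * s)"
      by simp
  qed
  have "0 \<in> D" "1 \<in> D"
    by (simp_all add: D_def zero)
  then have nat: "real m \<in> D" for m
    by (induction m) (simp_all add: D_add)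
  have "real m / 2 ^ k \<in> D" for m k
  proof (induction k)
    case (Suc k)
    then have "real m / 2 ^ k / 2 \<in> D"
      by (rule D_half)
    then show ?case
      by (metis divide_divide_eq_left power_Suc2)
  qed (simp add: nat)
  with \<open>closed D\<close> have "{0..} \<subseteq> D"
    by (rule nonneg_subset_if_closed_dyadics)
  with assms show ?thesis
    by (auto simp: D_def)
qed

lemma convex_epi_if_epi_sum_closed:
  fixes \<phi> :: "'a::{topological_ab_group_add, real_vector} \<Rightarrow> ereal"
  assumes scaleR_cont: "continuous_on UNIV (\<lambda>(a::real, x::'a). a *\<^sub>R x)"
    and cont: "continuous_on UNIV \<phi>" and zero: "\<phi> 0 = 0"
    and sum: "epi_sum_closed \<phi>" and sum_neg: "epi_sum_closed (\<lambda>x. - \<phi> x)"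
  shows "convex (epi_ereal \<phi>)"
proof (rule convexI)
  fix p q and u v :: real
  assume "p \<in> epi_ereal \<phi>" "q \<in> epi_ereal \<phi>" "0 \<le> u" "0 \<le> v"
  then show "u *\<^sub>R p + v *\<^sub>R q \<in> epi_ereal \<phi>"
    using epi_scaleR_closed[OF scaleR_cont cont zero sum sum_neg]
    by (cases p, cases q) (auto intro!: epi_sum_closedD[OF sum])
qed

theorem mainTheorem19:
  fixes \<phi> :: "'a::{topological_ab_group_add, real_vector} \<Rightarrow> ereal"
  assumes tvs: "continuous_on UNIV (\<lambda>(a::real, x::'a). a *\<^sub>R x)"
    and cont: "continuous_on UNIV \<phi>"
  shows "ereal_linear \<phi> \<longleftrightarrow> ereal_additive \<phi> \<and> \<phi> 0 = 0"
proof -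
  have cont_neg: "continuous_on UNIV (\<lambda>x. - \<phi> x)"
    by (rule continuous_on_compose2[OF continuous_uminus_ereal cont]) auto
  show ?thesis
    unfolding ereal_linear_iff ereal_additive_iff
    using epi_sum_closed_if_convex[of \<phi>] epi_sum_closed_if_convex[of "\<lambda>x. - \<phi> x"]
      convex_epi_if_epi_sum_closed[OF tvs cont] convex_epi_if_epi_sum_closed[OF tvs cont_neg]
    by auto
qed

end
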